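(* Let $f,g\in\mathbb{R}[x_1,\dots,x_n]$ be forms, where $f$ is nonconstant with strictly positive coefficients and $g(x)>0$ for all $x\in\mathbb{R}_+^n\setminus\{0\}$. If $\deg(f)$ divides $\deg(g)$, then there exists an integer $m\ge1$ such that all coefficients of $f^mg$ are nonnegative.
   Context: A form is a homogeneous polynomial. A form $f=\sum_{|w|=d}a_wx^w$ of degree $d$ has strictly positive coefficients if $a_w>0$ for every $w\in\mathbb{Z}_{\ge0}^n$ with $|w|=d$. $\mathbb{R}_+^n=\{x\in\mathbb{R}^n: x_i\ge0\ \forall i\}$. *)

theory Defs
  imports Complex_Main "HOL-Library.Poly_Mapping"
begin

(* Real polynomials in the variables x_0, x_1, ...: a polynomial is a finitely
   supported map from exponent vectors (nat \<Rightarrow>\<^sub>0 nat) to real coefficients. *)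
type_synonym rpoly = "(nat \<Rightarrow>\<^sub>0 nat) \<Rightarrow>\<^sub>0 real"

definition mon_deg :: "(nat \<Rightarrow>\<^sub>0 nat) \<Rightarrow> nat" where
  "mon_deg w = (\<Sum>i\<in>Poly_Mapping.keys w. Poly_Mapping.lookup w i)"

definition mon_in :: "nat \<Rightarrow> (nat \<Rightarrow>\<^sub>0 nat) \<Rightarrow> bool" where
  "mon_in n w \<longleftrightarrow> Poly_Mapping.keys w \<subseteq> {..<n}"

definition is_form :: "nat \<Rightarrow> nat \<Rightarrow> rpoly \<Rightarrow> bool" where
  "is_form n d p \<longleftrightarrow> (\<forall>w\<in>Poly_Mapping.keys p. mon_in n w \<and> mon_deg w = d)"

definition eval_poly :: "rpoly \<Rightarrow> (nat \<Rightarrow> real) \<Rightarrow> real" where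
  "eval_poly p x = (\<Sum>w\<in>Poly_Mapping.keys p. Poly_Mapping.lookup p w * (\<Prod>i\<in>Poly_Mapping.keys w. x i ^ Poly_Mapping.lookup w i))"

end

theory Submission
  imports Defs "HOL-Analysis.Analysis"
begin

text \<open>
  Let s = x_0 + ... + x_(n-1). By Polya's theorem, which follows from the multinomial
  expansion of s^N and the positivity of g on the compact standard simplex, there are
  eta > 0 and N_0 with s^N g >= eta s^(N+e) coefficientwise for all N >= N_0. Since f has
  positive coefficients on all monomials of degree d, f = c s^d + r with c > 0 and
  0 <= r <= R s^d. In the binomial expansion of (c s^d + r)^m g, the terms containing
  (s^d)^L with d L >= N_0 are nonnegative, and each of the finitely many other terms,
  j < L, is at least -K s^e times its polynomial factor and is absorbed by the term j + L
  as soon as m is so large that binom(m, j + L) / binom(m, j) exceeds a fixed constant.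
\<close>

section \<open>Coefficientwise order\<close>

lemma lookup_mult_keys:
  fixes p q :: "'a::monoid_add \<Rightarrow>\<^sub>0 'b::semiring_0"
  shows "Poly_Mapping.lookup (p * q) k =
    (\<Sum>l\<in>Poly_Mapping.keys p. Poly_Mapping.lookup p l *
      (\<Sum>m\<in>Poly_Mapping.keys q. Poly_Mapping.lookup q m when k = l + m))"
proof -
  have "Poly_Mapping.lookup (p * q) k = Sum_any (\<lambda>l. Poly_Mapping.lookup p l *
      (\<Sum>m\<in>Poly_Mapping.keys q. Poly_Mapping.lookup q m when k = l + m))"
    unfolding lookup_mult
    by (intro Sum_any.cong arg_cong[where f="\<lambda>x. _ * x"] Sum_any.expand_superset)
      (auto simp: in_keys_iff)
  also have "\<dots> = (\<Sum>l\<in>Poly_Mapping.keys p. Poly_Mapping.lookup p l *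
      (\<Sum>m\<in>Poly_Mapping.keys q. Poly_Mapping.lookup q m when k = l + m))"
    by (intro Sum_any.expand_superset) (auto simp: in_keys_iff)
  finally show ?thesis .
qed

lemma lookup_single_zero_mult:
  fixes p :: "'a::monoid_add \<Rightarrow>\<^sub>0 'b::semiring_0"
  shows "Poly_Mapping.lookup (Poly_Mapping.single 0 c * p) k = c * Poly_Mapping.lookup p k"
  by (simp flip: mult_map_scale_conv_mult add: map.rep_eq when_def)

lemma single_zero_mult:
  "Poly_Mapping.single (0::'a::comm_monoid_add) ((a::'b::semiring_0) * b) =
    Poly_Mapping.single 0 a * Poly_Mapping.single 0 b"
  by (simp add: mult_single)

lemma single_zero_power:
  "Poly_Mapping.single (0::'a::comm_monoid_add) (a::'b::comm_semiring_1) ^ k = Poly_Mapping.single 0 (a ^ k)"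
  by (induction k) (simp_all add: mult_single)

lemma binomial_ring_single_zero:
  fixes u r :: "'a::comm_monoid_add \<Rightarrow>\<^sub>0 real"
  shows "(Poly_Mapping.single 0 c * u + r) ^ m =
    (\<Sum>j\<le>m. Poly_Mapping.single 0 (real (m choose j) * c ^ j) * u ^ j * r ^ (m - j))"
  unfolding binomial_ring
proof (intro sum.cong refl)
  fix j
  have "of_nat (m choose j) * (Poly_Mapping.single 0 c * u) ^ j =
      Poly_Mapping.single 0 (real (m choose j) * c ^ j) * u ^ j"
    by (simp add: power_mult_distrib single_zero_power mult_single flip: single_of_nat mult.assoc)
  then show "of_nat (m choose j) * (Poly_Mapping.single 0 c * u) ^ j * r ^ (m - j) =
      Poly_Mapping.single 0 (real (m choose j) * c ^ j) * u ^ j * r ^ (m - j)"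
    by simp
qed

definition nonneg_coeffs :: "('a \<Rightarrow>\<^sub>0 'b::{zero,ord}) \<Rightarrow> bool" where
  "nonneg_coeffs p \<longleftrightarrow> (\<forall>k. 0 \<le> Poly_Mapping.lookup p k)"

definition coeffs_le :: "('a \<Rightarrow>\<^sub>0 'b::{zero,ord}) \<Rightarrow> ('a \<Rightarrow>\<^sub>0 'b) \<Rightarrow> bool" where
  "coeffs_le p q \<longleftrightarrow> (\<forall>k. Poly_Mapping.lookup p k \<le> Poly_Mapping.lookup q k)"

lemma coeffs_le_iff_nonneg_coeffs_diff:
  fixes p q :: "'a \<Rightarrow>\<^sub>0 'b::ordered_ab_group_add"
  shows "coeffs_le p q \<longleftrightarrow> nonneg_coeffs (q - p)"
  by (simp add: coeffs_le_def nonneg_coeffs_def lookup_minus)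

lemma nonneg_coeffs_mult:
  fixes p q :: "'a::comm_monoid_add \<Rightarrow>\<^sub>0 'b::linordered_idom"
  shows "nonneg_coeffs p \<Longrightarrow> nonneg_coeffs q \<Longrightarrow> nonneg_coeffs (p * q)"
  unfolding nonneg_coeffs_def lookup_mult_keys
  by (auto intro!: sum_nonneg mult_nonneg_nonneg simp: when_def)

lemma nonneg_coeffs_power:
  fixes p :: "'a::comm_monoid_add \<Rightarrow>\<^sub>0 'b::linordered_idom"
  shows "nonneg_coeffs p \<Longrightarrow> nonneg_coeffs (p ^ k)"
  by (induction k) (simp_all add: nonneg_coeffs_mult, simp add: nonneg_coeffs_def lookup_one when_def)

lemma nonneg_coeffs_single:
  fixes c :: "'b::{zero,preorder}"
  shows "0 \<le> c \<Longrightarrow> nonneg_coeffs (Poly_Mapping.single k c)"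
  by (simp add: nonneg_coeffs_def lookup_single when_def)

lemma nonneg_coeffs_add:
  fixes p q :: "'a \<Rightarrow>\<^sub>0 'b::ordered_comm_monoid_add"
  shows "nonneg_coeffs p \<Longrightarrow> nonneg_coeffs q \<Longrightarrow> nonneg_coeffs (p + q)"
  by (simp add: nonneg_coeffs_def lookup_add)

lemma nonneg_coeffs_sum:
  fixes f :: "'i \<Rightarrow> 'a \<Rightarrow>\<^sub>0 'b::ordered_comm_monoid_add"
  shows "(\<And>i. i \<in> A \<Longrightarrow> nonneg_coeffs (f i)) \<Longrightarrow> nonneg_coeffs (sum f A)"
  unfolding nonneg_coeffs_def by (simp add: lookup_sum sum_nonneg)

lemma nonneg_coeffs_coeffs_le:
  fixes p q :: "'a \<Rightarrow>\<^sub>0 'b::{zero,preorder}"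
  shows "nonneg_coeffs p \<Longrightarrow> coeffs_le p q \<Longrightarrow> nonneg_coeffs q"
  unfolding nonneg_coeffs_def coeffs_le_def by (meson order_trans)

lemma coeffs_le_trans [trans]:
  fixes p q r :: "'a \<Rightarrow>\<^sub>0 'b::{zero,preorder}"
  shows "coeffs_le p q \<Longrightarrow> coeffs_le q r \<Longrightarrow> coeffs_le p r"
  unfolding coeffs_le_def using order_trans by blast

lemma coeffs_le_mult_left:
  fixes p q r :: "'a::comm_monoid_add \<Rightarrow>\<^sub>0 'b::linordered_idom"
  shows "nonneg_coeffs r \<Longrightarrow> coeffs_le p q \<Longrightarrow> coeffs_le (r * p) (r * q)"
  unfolding coeffs_le_iff_nonneg_coeffs_diff by (metis nonneg_coeffs_mult right_diff_distrib)

lemma coeffs_le_mult_right: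
  fixes p q r :: "'a::comm_monoid_add \<Rightarrow>\<^sub>0 'b::linordered_idom"
  shows "nonneg_coeffs r \<Longrightarrow> coeffs_le p q \<Longrightarrow> coeffs_le (p * r) (q * r)"
  using coeffs_le_mult_left[of r p q] by (simp add: mult.commute)

lemma coeffs_le_power:
  fixes p q :: "'a::comm_monoid_add \<Rightarrow>\<^sub>0 'b::linordered_idom"
  shows "nonneg_coeffs p \<Longrightarrow> coeffs_le p q \<Longrightarrow> coeffs_le (p ^ k) (q ^ k)"
proof (induction k)
  case 0
  then show ?case by (simp add: coeffs_le_def)
next
  case (Suc k)
  have "nonneg_coeffs q"
    using Suc.prems by (rule nonneg_coeffs_coeffs_le)
  then have "coeffs_le (p * p ^ k) (q * p ^ k)" "coeffs_le (q * p ^ k) (q * q ^ k)"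
    using Suc by (auto intro: coeffs_le_mult_left coeffs_le_mult_right nonneg_coeffs_power)
  then show ?case by (auto intro: coeffs_le_trans)
qed

lemma coeffs_le_smult:
  fixes p :: "'a::comm_monoid_add \<Rightarrow>\<^sub>0 'b::linordered_idom"
  shows "a \<le> b \<Longrightarrow> nonneg_coeffs p \<Longrightarrow>
    coeffs_le (Poly_Mapping.single 0 a * p) (Poly_Mapping.single 0 b * p)"
  by (auto simp: coeffs_le_def nonneg_coeffs_def lookup_single_zero_mult intro: mult_right_mono)

lemma coeffs_le_sum:
  fixes f g :: "'i \<Rightarrow> 'a \<Rightarrow>\<^sub>0 'b::ordered_comm_monoid_add"
  shows "(\<And>i. i \<in> A \<Longrightarrow> coeffs_le (f i) (g i)) \<Longrightarrow> coeffs_le (sum f A) (sum g A)"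
  unfolding coeffs_le_def by (simp add: lookup_sum sum_mono)

lemma coeffs_le_smult_power_mult:
  fixes u r X :: "'a::comm_monoid_add \<Rightarrow>\<^sub>0 real"
  assumes u: "nonneg_coeffs u" and r: "nonneg_coeffs r" and X: "nonneg_coeffs X"
    and r_upper: "coeffs_le r (Poly_Mapping.single 0 R * u)" and "0 \<le> a" "a * R ^ L \<le> b"
  shows "coeffs_le (Poly_Mapping.single 0 a * (r ^ L * X)) (Poly_Mapping.single 0 b * (u ^ L * X))"
proof -
  have "coeffs_le (r ^ L * X) (Poly_Mapping.single 0 (R ^ L) * (u ^ L * X))"
    using coeffs_le_mult_right[OF X coeffs_le_power[OF r r_upper, of L]]
    by (simp add: power_mult_distrib single_zero_power mult.assoc)
  then have "coeffs_le (Poly_Mapping.single 0 a * (r ^ L * X))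
      (Poly_Mapping.single 0 a * (Poly_Mapping.single 0 (R ^ L) * (u ^ L * X)))"
    by (rule coeffs_le_mult_left[OF nonneg_coeffs_single[OF \<open>0 \<le> a\<close>]])
  then have "coeffs_le (Poly_Mapping.single 0 a * (r ^ L * X))
      (Poly_Mapping.single 0 (a * R ^ L) * (u ^ L * X))"
    by (simp add: mult_single flip: mult.assoc)
  also have "coeffs_le \<dots> (Poly_Mapping.single 0 b * (u ^ L * X))"
    using assms by (intro coeffs_le_smult nonneg_coeffs_mult nonneg_coeffs_power)
  finally show ?thesis .
qed

lemma coeffs_abs_le_multiple:
  fixes p q :: "'a \<Rightarrow>\<^sub>0 real"
  assumes keys: "Poly_Mapping.keys p \<subseteq> Poly_Mapping.keys q" and q: "nonneg_coeffs q"
  shows "\<exists>R\<ge>0. \<forall>k. \<bar>Poly_Mapping.lookup p k\<bar> \<le> R * Poly_Mapping.lookup q k"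
proof -
  define R where "R = Max (insert 0 ((\<lambda>k. \<bar>Poly_Mapping.lookup p k\<bar> / Poly_Mapping.lookup q k) ` Poly_Mapping.keys p))"
  have "\<bar>Poly_Mapping.lookup p k\<bar> \<le> R * Poly_Mapping.lookup q k" for k
  proof (cases "k \<in> Poly_Mapping.keys p")
    case True
    then have "0 < Poly_Mapping.lookup q k"
      using keys q by (auto simp: nonneg_coeffs_def in_keys_iff order_less_le)
    moreover have "\<bar>Poly_Mapping.lookup p k\<bar> / Poly_Mapping.lookup q k \<le> R"
      unfolding R_def using True by (intro Max_ge) auto
    ultimately show ?thesis by (simp add: field_simps)
  next
    case False
    moreover have "0 \<le> R" unfolding R_def by (intro Max_ge) auto
    ultimately show ?thesis using q by (simp add: in_keys_iff nonneg_coeffs_def)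
  qed
  moreover have "0 \<le> R" unfolding R_def by (intro Max_ge) auto
  ultimately show ?thesis by blast
qed

lemma multiple_coeffs_le:
  fixes p q :: "'a::comm_monoid_add \<Rightarrow>\<^sub>0 real"
  assumes keys: "\<And>k. k \<in> Poly_Mapping.keys q \<Longrightarrow> 0 < Poly_Mapping.lookup p k"
    and p: "nonneg_coeffs p" and q: "nonneg_coeffs q"
  shows "\<exists>c>0. coeffs_le (Poly_Mapping.single 0 c * q) p"
proof -
  define c where "c = Min (insert 1 ((\<lambda>k. Poly_Mapping.lookup p k / Poly_Mapping.lookup q k) ` Poly_Mapping.keys q))"
  have "c \<in> insert 1 ((\<lambda>k. Poly_Mapping.lookup p k / Poly_Mapping.lookup q k) ` Poly_Mapping.keys q)"
    unfolding c_def by (intro Min_in) auto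
  then have "0 < c"
    using keys q by (auto simp: nonneg_coeffs_def in_keys_iff order_less_le)
  moreover have "c * Poly_Mapping.lookup q k \<le> Poly_Mapping.lookup p k" for k
  proof (cases "k \<in> Poly_Mapping.keys q")
    case True
    then have "0 < Poly_Mapping.lookup q k"
      using q by (auto simp: nonneg_coeffs_def in_keys_iff order_less_le)
    moreover have "c \<le> Poly_Mapping.lookup p k / Poly_Mapping.lookup q k"
      unfolding c_def using True by (intro Min_le) auto
    ultimately show ?thesis by (simp add: field_simps)
  qed (use p in \<open>simp add: in_keys_iff nonneg_coeffs_def\<close>)
  ultimately show ?thesis
    by (auto simp: coeffs_le_def lookup_single_zero_mult)
qed

section \<open>Powers of the sum of the variables\<close>

lemma lookup_single_mult:
  fixes p :: "(nat \<Rightarrow>\<^sub>0 nat) \<Rightarrow>\<^sub>0 'b::semiring_0"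
  shows "Poly_Mapping.lookup (Poly_Mapping.single b c * p) a =
    (if \<forall>i. Poly_Mapping.lookup b i \<le> Poly_Mapping.lookup a i
     then c * Poly_Mapping.lookup p (a - b) else 0)"
proof -
  have shift: "a = b + m \<longleftrightarrow> (\<forall>i. Poly_Mapping.lookup b i \<le> Poly_Mapping.lookup a i) \<and> m = a - b"
    for m :: "nat \<Rightarrow>\<^sub>0 nat"
    by (auto simp: poly_mapping_eq_iff lookup_add lookup_minus fun_eq_iff)
  have "Poly_Mapping.lookup (Poly_Mapping.single b c * p) a =
      c * Sum_any (\<lambda>m. Poly_Mapping.lookup p m when a = b + m)"
    by (simp add: lookup_mult lookup_single when_mult Sum_any_right_distrib flip: when_when)
  also have "\<dots> = c * Sum_any (\<lambda>m. (Poly_Mapping.lookup p m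
      when (\<forall>i. Poly_Mapping.lookup b i \<le> Poly_Mapping.lookup a i)) when m = a - b)"
    unfolding shift by (intro arg_cong[where f="\<lambda>x. c * x"] Sum_any.cong) (auto simp: when_def)
  finally show ?thesis
    by (cases "\<forall>i. Poly_Mapping.lookup b i \<le> Poly_Mapping.lookup a i") (auto simp: when_def)
qed

definition var_sum :: "nat \<Rightarrow> rpoly" where
  "var_sum n = (\<Sum>i<n. Poly_Mapping.single (Poly_Mapping.single i 1) 1)"

definition degree_in :: "nat \<Rightarrow> (nat \<Rightarrow>\<^sub>0 nat) \<Rightarrow> nat" where
  "degree_in n w = (\<Sum>i<n. Poly_Mapping.lookup w i)"

definition exponent_fact :: "nat \<Rightarrow> (nat \<Rightarrow>\<^sub>0 nat) \<Rightarrow> real" where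
  "exponent_fact n w = (\<Prod>i<n. fact (Poly_Mapping.lookup w i))"

lemma mon_in_iff: "mon_in n w \<longleftrightarrow> (\<forall>i\<ge>n. Poly_Mapping.lookup w i = 0)"
  unfolding mon_in_def subset_iff in_keys_iff by (metis lessThan_iff not_le)

lemma mon_deg_eq_degree_in: "mon_in n w \<Longrightarrow> mon_deg w = degree_in n w"
  unfolding mon_deg_def degree_in_def mon_in_def
  by (rule sum.mono_neutral_left) (auto simp: in_keys_iff)

lemma is_formD:
  "is_form n e g \<Longrightarrow> b \<in> Poly_Mapping.keys g \<Longrightarrow> mon_in n b \<and> degree_in n b = e"
  unfolding is_form_def using mon_deg_eq_degree_in by auto

lemma exponent_fact_pos: "0 < exponent_fact n w"
  unfolding exponent_fact_def by (simp add: prod_pos)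

lemma lookup_var_sum_mult:
  "Poly_Mapping.lookup (var_sum n * p) w =
    (\<Sum>i<n. if 0 < Poly_Mapping.lookup w i
      then Poly_Mapping.lookup p (w - Poly_Mapping.single i 1) else 0)"
proof -
  have *: "(\<forall>j. Poly_Mapping.lookup (Poly_Mapping.single i 1) j \<le> Poly_Mapping.lookup w j) \<longleftrightarrow>
      0 < Poly_Mapping.lookup w i" for i
    by (auto simp: lookup_single when_def simp del: One_nat_def)
  show ?thesis
    unfolding var_sum_def sum_distrib_right lookup_sum lookup_single_mult * mult_1_left ..
qed

context
  fixes n i :: nat and w :: "nat \<Rightarrow>\<^sub>0 nat"
  assumes i: "i < n" and w_i: "0 < Poly_Mapping.lookup w i"
begin

lemma lookup_minus_single_one:
  "Poly_Mapping.lookup (w - Poly_Mapping.single i 1) j = Poly_Mapping.lookup w j - (if j = i then 1 else 0)"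
  by (simp add: lookup_minus lookup_single when_def)

lemma mon_in_minus_single_one: "mon_in n (w - Poly_Mapping.single i 1) \<longleftrightarrow> mon_in n w"
  using i by (auto simp: mon_in_iff lookup_minus_single_one simp del: One_nat_def)

lemma degree_in_minus_single_one:
  "degree_in n w = Suc (degree_in n (w - Poly_Mapping.single i 1))"
proof -
  have "degree_in n w = Poly_Mapping.lookup w i + (\<Sum>j\<in>{..<n}-{i}. Poly_Mapping.lookup w j)"
    unfolding degree_in_def using i by (subst sum.remove[of _ i]) auto
  moreover have "degree_in n (w - Poly_Mapping.single i 1) =
      (Poly_Mapping.lookup w i - 1) + (\<Sum>j\<in>{..<n}-{i}. Poly_Mapping.lookup w j)"
    unfolding degree_in_def using i
    by (subst sum.remove[of _ i]) (auto simp: lookup_minus_single_one simp del: One_nat_def intro!: sum.cong)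
  ultimately show ?thesis using w_i by simp
qed

lemma exponent_fact_minus_single_one:
  "exponent_fact n w = Poly_Mapping.lookup w i * exponent_fact n (w - Poly_Mapping.single i 1)"
proof -
  have "exponent_fact n w = fact (Poly_Mapping.lookup w i) * (\<Prod>j\<in>{..<n}-{i}. fact (Poly_Mapping.lookup w j))"
    unfolding exponent_fact_def using i by (subst prod.remove[of _ i]) auto
  moreover have "exponent_fact n (w - Poly_Mapping.single i 1) =
      fact (Poly_Mapping.lookup w i - 1) * (\<Prod>j\<in>{..<n}-{i}. fact (Poly_Mapping.lookup w j))"
    unfolding exponent_fact_def using i
    by (subst prod.remove[of _ i]) (auto simp: lookup_minus_single_one simp del: One_nat_def intro!: prod.cong)
  moreover have "(fact (Poly_Mapping.lookup w i) :: real) =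
      real (Poly_Mapping.lookup w i) * fact (Poly_Mapping.lookup w i - 1)"
    using w_i by (simp add: fact_reduce)
  ultimately show ?thesis by simp
qed

end

lemma mon_in_degree_in_zero: "mon_in n w \<Longrightarrow> degree_in n w = 0 \<Longrightarrow> w = 0"
  unfolding degree_in_def mon_in_iff
  by (auto simp: poly_mapping_eq_iff fun_eq_iff) (metis lessThan_iff not_le)

lemma lookup_var_sum_power:
  "Poly_Mapping.lookup (var_sum n ^ N) w =
    (if mon_in n w \<and> degree_in n w = N then fact N / exponent_fact n w else 0)"
proof (induction N arbitrary: w)
  case 0
  show ?case
  proof (cases "w = 0")
    case False
    then show ?thesis using mon_in_degree_in_zero[of n w] by (auto simp: lookup_one when_def)
  qed (simp add: lookup_one mon_in_def degree_in_def exponent_fact_def)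
next
  case (Suc N)
  let ?P = "mon_in n w \<and> degree_in n w = Suc N"
  have summand: "(if 0 < Poly_Mapping.lookup w i
      then Poly_Mapping.lookup (var_sum n ^ N) (w - Poly_Mapping.single i 1) else 0) =
    (if ?P then fact N * Poly_Mapping.lookup w i / exponent_fact n w else 0)" if i: "i < n" for i
  proof (cases "0 < Poly_Mapping.lookup w i")
    case True
    note facts = mon_in_minus_single_one[OF i True] degree_in_minus_single_one[OF i True]
      exponent_fact_minus_single_one[OF i True]
    show ?thesis
      using True exponent_fact_pos[of n "w - Poly_Mapping.single i 1"]
      by (auto simp: Suc.IH facts simp del: One_nat_def)
  next
    case False
    then show ?thesis by simp
  qed
  have "Poly_Mapping.lookup (var_sum n ^ Suc N) w =
      (\<Sum>i<n. if ?P then fact N * Poly_Mapping.lookup w i / exponent_fact n w else 0)"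
    by (simp add: lookup_var_sum_mult summand)
  also have "\<dots> = (if ?P then fact N * degree_in n w / exponent_fact n w else 0)"
  proof (cases ?P)
    case True
    have "(\<Sum>i<n. fact N * Poly_Mapping.lookup w i / exponent_fact n w) =
        fact N * degree_in n w / exponent_fact n w"
      by (simp add: degree_in_def sum_divide_distrib sum_distrib_left)
    then show ?thesis using True by simp
  next
    case False
    then show ?thesis by (simp only: if_not_P if_False sum.neutral_const)
  qed
  finally show ?case by (cases ?P) (auto simp: algebra_simps)
qed

lemma keys_var_sum_power:
  "Poly_Mapping.keys (var_sum n ^ N) = {w. mon_in n w \<and> degree_in n w = N}"
proof -
  have "exponent_fact n w \<noteq> 0" for w
    using exponent_fact_pos[of n w] by simp
  then show ?thesis by (auto simp: in_keys_iff lookup_var_sum_power split: if_splits)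
qed

lemma nonneg_coeffs_var_sum_power: "nonneg_coeffs (var_sum n ^ N)"
  using exponent_fact_pos by (auto simp: nonneg_coeffs_def lookup_var_sum_power less_imp_le)

lemma form_sandwiched_by_var_sum_power:
  assumes f: "is_form n d f"
    and f_pos: "\<And>w. mon_in n w \<Longrightarrow> mon_deg w = d \<Longrightarrow> 0 < Poly_Mapping.lookup f w"
  shows "\<exists>c>0. \<exists>R. coeffs_le (Poly_Mapping.single 0 c * var_sum n ^ d) f \<and>
    coeffs_le f (Poly_Mapping.single 0 R * var_sum n ^ d)"
proof -
  have "0 \<le> Poly_Mapping.lookup f w" for w
  proof (cases "w \<in> Poly_Mapping.keys f")
    case True
    then show ?thesis using f f_pos[of w] by (auto simp: is_form_def)
  qed (simp add: in_keys_iff)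
  then have "nonneg_coeffs f" by (simp add: nonneg_coeffs_def)
  moreover have "0 < Poly_Mapping.lookup f w" if "w \<in> Poly_Mapping.keys (var_sum n ^ d)" for w
    using that f_pos mon_deg_eq_degree_in by (auto simp: keys_var_sum_power)
  ultimately obtain c where "0 < c" "coeffs_le (Poly_Mapping.single 0 c * var_sum n ^ d) f"
    using multiple_coeffs_le[of "var_sum n ^ d" f] nonneg_coeffs_var_sum_power by blast
  moreover obtain R where "\<forall>k. \<bar>Poly_Mapping.lookup f k\<bar> \<le> R * Poly_Mapping.lookup (var_sum n ^ d) k"
    using coeffs_abs_le_multiple[OF _ nonneg_coeffs_var_sum_power, of f n d] is_formD[OF f]
    by (auto simp: keys_var_sum_power)
  then have "coeffs_le f (Poly_Mapping.single 0 R * var_sum n ^ d)"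
    by (auto simp: coeffs_le_def lookup_single_zero_mult intro: order.trans[OF abs_ge_self])
  ultimately show ?thesis by blast
qed

lemma form_bounded_below_by_var_sum_power:
  assumes g: "is_form n e g"
  shows "\<exists>K\<ge>0. coeffs_le (- (Poly_Mapping.single 0 K * var_sum n ^ e)) g"
proof -
  obtain K where "0 \<le> K" "\<forall>k. \<bar>Poly_Mapping.lookup g k\<bar> \<le> K * Poly_Mapping.lookup (var_sum n ^ e) k"
    using coeffs_abs_le_multiple[OF _ nonneg_coeffs_var_sum_power, of g n e] is_formD[OF g]
    by (auto simp: keys_var_sum_power)
  then show ?thesis
    by (auto simp: coeffs_le_def lookup_single_zero_mult abs_le_iff minus_le_iff)
qed

section \<open>Polya's theorem\<close>

text \<open>The coordinates from \<open>n\<close> on are fixed to \<open>0\<close>, which makes the simplex compact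
  in the product topology of \<^typ>\<open>nat \<Rightarrow> real\<close>.\<close>

definition std_simplex :: "nat \<Rightarrow> (nat \<Rightarrow> real) set" where
  "std_simplex n = {x. (\<forall>i<n. 0 \<le> x i) \<and> (\<forall>i\<ge>n. x i = 0) \<and> (\<Sum>i<n. x i) = 1}"

lemma compact_std_simplex: "compact (std_simplex n)"
proof -
  define box where "box = PiE UNIV (\<lambda>i. if i < n then {0..1::real} else {0})"
  have "compactin (product_topology (\<lambda>_. euclidean) UNIV) box"
    unfolding box_def compactin_PiE by auto
  then have "compact box"
    by (simp add: euclidean_product_topology)
  moreover have "closed (std_simplex n)"
    unfolding std_simplex_def Collect_conj_eq
    by (intro closed_Int closed_Collect_all closed_Collect_imp closed_Collect_le closed_Collect_eq
        continuous_intros continuous_on_product_coordinates) auto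
  moreover have "std_simplex n \<subseteq> box"
  proof
    fix x assume x: "x \<in> std_simplex n"
    have "x i \<le> 1" if "i < n" for i
    proof -
      have "x i \<le> (\<Sum>j<n. x j)"
        using x that by (intro member_le_sum) (auto simp: std_simplex_def)
      then show ?thesis using x by (simp add: std_simplex_def)
    qed
    then show "x \<in> box" using x by (auto simp: box_def std_simplex_def)
  qed
  ultimately show ?thesis
    by (metis compact_Int_closed inf.absorb_iff2)
qed

lemma continuous_on_eval_poly: "continuous_on UNIV (eval_poly p)"
  unfolding eval_poly_def by (intro continuous_intros continuous_on_product_coordinates)

lemma eval_poly_uniformly_pos_on_std_simplex:
  assumes "\<And>x. x \<in> std_simplex n \<Longrightarrow> 0 < eval_poly g x"
  shows "\<exists>\<mu>>0. \<forall>x\<in>std_simplex n. \<mu> \<le> eval_poly g x"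
proof (cases "std_simplex n = {}")
  case False
  then obtain x0 where "x0 \<in> std_simplex n" "\<forall>x\<in>std_simplex n. eval_poly g x0 \<le> eval_poly g x"
    using continuous_attains_inf[OF compact_std_simplex False]
      continuous_on_subset[OF continuous_on_eval_poly] by blast
  then show ?thesis using assms by blast
qed (auto intro: exI[of _ 1])

lemma eval_poly_pos_on_std_simplex:
  assumes "\<And>x::nat \<Rightarrow> real. (\<forall>i<n. x i \<ge> 0) \<Longrightarrow> (\<exists>i<n. x i \<noteq> 0) \<Longrightarrow> eval_poly g x > 0"
  shows "x \<in> std_simplex n \<Longrightarrow> 0 < eval_poly g x"
  using assms[of x] by (force simp: std_simplex_def)

definition falling_fact :: "nat \<Rightarrow> nat \<Rightarrow> real" where
  "falling_fact a b = (\<Prod>k<b. real a - real k)"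

definition exponent_falling_fact :: "nat \<Rightarrow> (nat \<Rightarrow>\<^sub>0 nat) \<Rightarrow> (nat \<Rightarrow>\<^sub>0 nat) \<Rightarrow> real" where
  "exponent_falling_fact n a b = (\<Prod>i<n. falling_fact (Poly_Mapping.lookup a i) (Poly_Mapping.lookup b i))"

lemma fact_eq_fact_diff_mult_falling_fact: "b \<le> a \<Longrightarrow> fact a = fact (a - b) * falling_fact a b"
proof (induction b)
  case (Suc b)
  then have "(fact (a - b) :: real) = real (a - b) * fact (a - Suc b)"
    by (simp add: fact_reduce Suc_diff_Suc)
  then show ?case using Suc by (simp add: falling_fact_def)
qed (simp add: falling_fact_def)

lemma falling_fact_eq_0: "a < b \<Longrightarrow> falling_fact a b = 0"
  unfolding falling_fact_def by (rule prod_zero) auto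

lemma fact_add_le: "fact (N + e) \<le> (fact N * (N + e) ^ e :: nat)"
proof -
  have "fact (N + e) = (fact N * (fact (N + e) div fact N) :: nat)"
    by (rule dvd_mult_div_cancel[symmetric], rule fact_dvd) simp
  also have "\<dots> \<le> fact N * (N + e) ^ e"
    using fact_div_fact_le_pow[of e "N + e"] by simp
  finally show ?thesis .
qed

lemma lookup_var_sum_power_minus:
  assumes b: "mon_in n b" "degree_in n b = e"
  shows "(if \<forall>i. Poly_Mapping.lookup b i \<le> Poly_Mapping.lookup a i
      then Poly_Mapping.lookup (var_sum n ^ N) (a - b) else 0) =
    (if mon_in n a \<and> degree_in n a = N + e
      then fact N / exponent_fact n a * exponent_falling_fact n a b else 0)"
proof (cases "\<forall>i. Poly_Mapping.lookup b i \<le> Poly_Mapping.lookup a i")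
  case True
  have "mon_in n (a - b) \<longleftrightarrow> mon_in n a"
    using b True by (auto simp: mon_in_iff lookup_minus)
  moreover have "degree_in n a = degree_in n (a - b) + e"
  proof -
    have "degree_in n a = (\<Sum>i<n. (Poly_Mapping.lookup a i - Poly_Mapping.lookup b i) + Poly_Mapping.lookup b i)"
      using True by (simp add: degree_in_def)
    then show ?thesis using b(2) by (simp add: sum.distrib degree_in_def lookup_minus)
  qed
  moreover have "exponent_fact n a = exponent_fact n (a - b) * exponent_falling_fact n a b"
    unfolding exponent_fact_def exponent_falling_fact_def lookup_minus prod.distrib[symmetric]
    by (intro prod.cong refl fact_eq_fact_diff_mult_falling_fact True[rule_format])
  ultimately show ?thesis
    using True exponent_fact_pos[of n a] exponent_fact_pos[of n "a - b"]
    by (auto simp: lookup_var_sum_power)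
next
  case False
  then obtain i where i: "Poly_Mapping.lookup a i < Poly_Mapping.lookup b i"
    by (auto simp: not_le)
  then have "i < n" using b(1) by (metis mon_in_iff not_le not_less0)
  then have "exponent_falling_fact n a b = 0"
    unfolding exponent_falling_fact_def using falling_fact_eq_0[OF i] by (intro prod_zero) auto
  then show ?thesis using False by auto
qed

lemma lookup_var_sum_power_mult_form:
  assumes g: "is_form n e g"
  shows "Poly_Mapping.lookup (var_sum n ^ N * g) a =
    (if mon_in n a \<and> degree_in n a = N + e
     then fact N / exponent_fact n a *
       (\<Sum>b\<in>Poly_Mapping.keys g. Poly_Mapping.lookup g b * exponent_falling_fact n a b)
     else 0)"
proof -
  let ?P = "mon_in n a \<and> degree_in n a = N + e"
  have "g = (\<Sum>b\<in>Poly_Mapping.keys g. Poly_Mapping.single b (Poly_Mapping.lookup g b))"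
    by (rule poly_mapping_eqI) (auto simp: lookup_sum lookup_single when_def in_keys_iff)
  then have "var_sum n ^ N * g =
      (\<Sum>b\<in>Poly_Mapping.keys g. Poly_Mapping.single b (Poly_Mapping.lookup g b) * var_sum n ^ N)"
    by (metis (no_types, lifting) mult.commute sum.cong sum_distrib_left)
  then have "Poly_Mapping.lookup (var_sum n ^ N * g) a =
      (\<Sum>b\<in>Poly_Mapping.keys g. Poly_Mapping.lookup g b *
        (if \<forall>i. Poly_Mapping.lookup b i \<le> Poly_Mapping.lookup a i
         then Poly_Mapping.lookup (var_sum n ^ N) (a - b) else 0))"
    by (auto simp: lookup_sum lookup_single_mult intro!: sum.cong)
  also have "\<dots> = (\<Sum>b\<in>Poly_Mapping.keys g. Poly_Mapping.lookup g b *
      (if ?P then fact N / exponent_fact n a * exponent_falling_fact n a b else 0))"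
    using is_formD[OF g] by (intro sum.cong refl) (simp add: lookup_var_sum_power_minus)
  finally show ?thesis
    by (cases ?P) (auto simp: sum_distrib_left mult_ac)
qed

lemma abs_prod_diff_le_sum_abs_diff:
  fixes u v :: "'a \<Rightarrow> real"
  assumes "\<And>x. x \<in> S \<Longrightarrow> \<bar>u x\<bar> \<le> 1" "\<And>x. x \<in> S \<Longrightarrow> \<bar>v x\<bar> \<le> 1"
  shows "\<bar>prod u S - prod v S\<bar> \<le> (\<Sum>x\<in>S. \<bar>u x - v x\<bar>)"
  using assms
proof (induction S rule: infinite_finite_induct)
  case (insert a S)
  have v_S: "\<bar>prod v S\<bar> \<le> 1"
    using insert.prems by (simp add: abs_prod prod_le_1)
  have "u a * prod u S - v a * prod v S = u a * (prod u S - prod v S) + (u a - v a) * prod v S"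
    by (simp add: algebra_simps)
  then have "\<bar>u a * prod u S - v a * prod v S\<bar> \<le>
      \<bar>u a\<bar> * \<bar>prod u S - prod v S\<bar> + \<bar>u a - v a\<bar> * \<bar>prod v S\<bar>"
    by (metis abs_mult abs_triangle_ineq)
  also have "\<dots> \<le> 1 * \<bar>prod u S - prod v S\<bar> + \<bar>u a - v a\<bar> * 1"
    using insert.prems v_S by (intro add_mono mult_mono) auto
  finally show ?case using insert by simp
qed simp_all

lemma exponent_falling_fact_approx:
  fixes a b :: "nat \<Rightarrow>\<^sub>0 nat"
  assumes a: "degree_in n a = M" and b: "degree_in n b = e" and "e \<le> M" "0 < M"
  shows "\<bar>exponent_falling_fact n a b / real M ^ e -
      (\<Prod>i<n. (Poly_Mapping.lookup a i / M) ^ Poly_Mapping.lookup b i)\<bar> \<le> e * e / M"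
proof -
  define U where "U i = (\<Prod>k<Poly_Mapping.lookup b i. (Poly_Mapping.lookup a i - real k) / M)" for i
  define V where "V i = (\<Prod>k<Poly_Mapping.lookup b i. Poly_Mapping.lookup a i / real M)" for i
  have a_le: "Poly_Mapping.lookup a i \<le> M" and b_le: "Poly_Mapping.lookup b i \<le> e" if "i < n" for i
    using a b that unfolding degree_in_def by (metis finite_lessThan lessThan_iff member_le_sum zero_le)+
  have "real M ^ e = (\<Prod>i<n. real M ^ Poly_Mapping.lookup b i)"
    using b unfolding degree_in_def by (metis power_sum)
  then have UV: "exponent_falling_fact n a b / real M ^ e = (\<Prod>i<n. U i)"
    "(\<Prod>i<n. (Poly_Mapping.lookup a i / M) ^ Poly_Mapping.lookup b i) = (\<Prod>i<n. V i)"
    unfolding U_def V_def exponent_falling_fact_def falling_fact_def prod_dividef[symmetric]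
    by (auto intro!: prod.cong simp: prod_dividef)
  have V_factor: "\<bar>Poly_Mapping.lookup a i / real M\<bar> \<le> 1" if "i < n" for i
    using a_le[OF that] assms by simp
  have U_factor: "\<bar>(Poly_Mapping.lookup a i - real k) / M\<bar> \<le> 1"
    and UV_factor: "\<bar>(Poly_Mapping.lookup a i - real k) / M - Poly_Mapping.lookup a i / M\<bar> \<le> e / M"
    if "i < n" "k < Poly_Mapping.lookup b i" for i k
    using a_le[OF that(1)] b_le[OF that(1)] that(2) assms by (auto simp: abs_le_iff field_simps)
  have U_le: "\<bar>U i\<bar> \<le> 1" and V_le: "\<bar>V i\<bar> \<le> 1" if "i < n" for i
    unfolding U_def V_def abs_prod using U_factor[OF that] V_factor[OF that]
    by (auto intro!: prod_le_1 power_le_one)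
  have "\<bar>U i - V i\<bar> \<le> Poly_Mapping.lookup b i * (e / M)" if "i < n" for i
  proof -
    have "\<bar>U i - V i\<bar> \<le> (\<Sum>k<Poly_Mapping.lookup b i.
        \<bar>(Poly_Mapping.lookup a i - real k) / M - Poly_Mapping.lookup a i / M\<bar>)"
      unfolding U_def V_def by (rule abs_prod_diff_le_sum_abs_diff) (use U_factor V_factor that in auto)
    also have "\<dots> \<le> (\<Sum>k<Poly_Mapping.lookup b i. e / M)"
      by (rule sum_mono) (use UV_factor that in auto)
    finally show ?thesis by simp
  qed
  then have "\<bar>(\<Prod>i<n. U i) - (\<Prod>i<n. V i)\<bar> \<le> (\<Sum>i<n. Poly_Mapping.lookup b i * (e / M))"
    using U_le V_le by (intro order.trans[OF abs_prod_diff_le_sum_abs_diff] sum_mono) auto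
  also have "\<dots> = degree_in n b * (e / M)"
    by (simp add: degree_in_def sum_distrib_right sum_divide_distrib)
  also have "\<dots> = real e * e / M"
    using b by simp
  finally show ?thesis unfolding UV .
qed

lemma eval_poly_form:
  assumes "is_form n e g"
  shows "eval_poly g x =
    (\<Sum>b\<in>Poly_Mapping.keys g. Poly_Mapping.lookup g b * (\<Prod>i<n. x i ^ Poly_Mapping.lookup b i))"
  unfolding eval_poly_def
proof (intro sum.cong refl arg_cong[where f="\<lambda>y. _ * y"])
  fix b assume "b \<in> Poly_Mapping.keys g"
  then have "Poly_Mapping.keys b \<subseteq> {..<n}"
    using assms by (auto simp: is_form_def mon_in_def)
  then show "(\<Prod>i\<in>Poly_Mapping.keys b. x i ^ Poly_Mapping.lookup b i) = (\<Prod>i<n. x i ^ Poly_Mapping.lookup b i)"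
    by (intro prod.mono_neutral_left) (auto simp: in_keys_iff)
qed

lemma falling_fact_sum_approx_eval_poly:
  assumes g: "is_form n e g" and a: "degree_in n a = M" "e \<le> M" "0 < M"
  shows "\<bar>(\<Sum>b\<in>Poly_Mapping.keys g. Poly_Mapping.lookup g b * exponent_falling_fact n a b) / real M ^ e
      - eval_poly g (\<lambda>i. Poly_Mapping.lookup a i / M)\<bar>
    \<le> (\<Sum>b\<in>Poly_Mapping.keys g. \<bar>Poly_Mapping.lookup g b\<bar>) * (real e * e / M)"
proof -
  have "(\<Sum>b\<in>Poly_Mapping.keys g. Poly_Mapping.lookup g b * exponent_falling_fact n a b) / real M ^ e
      - eval_poly g (\<lambda>i. Poly_Mapping.lookup a i / M) =
    (\<Sum>b\<in>Poly_Mapping.keys g. Poly_Mapping.lookup g b *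
      (exponent_falling_fact n a b / real M ^ e -
       (\<Prod>i<n. (Poly_Mapping.lookup a i / M) ^ Poly_Mapping.lookup b i)))"
    by (simp add: eval_poly_form[OF g] sum_divide_distrib right_diff_distrib sum_subtractf)
  also have "\<bar>\<dots>\<bar> \<le> (\<Sum>b\<in>Poly_Mapping.keys g. \<bar>Poly_Mapping.lookup g b\<bar> * (real e * e / M))"
  proof (intro order.trans[OF sum_abs] sum_mono)
    fix b assume "b \<in> Poly_Mapping.keys g"
    then show "\<bar>Poly_Mapping.lookup g b * (exponent_falling_fact n a b / real M ^ e -
        (\<Prod>i<n. (Poly_Mapping.lookup a i / M) ^ Poly_Mapping.lookup b i))\<bar>
      \<le> \<bar>Poly_Mapping.lookup g b\<bar> * (real e * e / M)"
      unfolding abs_mult using is_formD[OF g] a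
      by (intro mult_left_mono exponent_falling_fact_approx) auto
  qed
  finally show ?thesis by (simp only: sum_distrib_right)
qed

lemma polya_coeff_lower_bound:
  assumes g: "is_form n e g"
    and \<mu>: "0 < \<mu>" "\<And>x. x \<in> std_simplex n \<Longrightarrow> \<mu> \<le> eval_poly g x"
    and M: "0 < N + e"
    and err: "(\<Sum>b\<in>Poly_Mapping.keys g. \<bar>Poly_Mapping.lookup g b\<bar>) * (real e * e / (N + e)) \<le> \<mu> / 2"
  shows "\<mu> / 2 * Poly_Mapping.lookup (var_sum n ^ (N + e)) a \<le> Poly_Mapping.lookup (var_sum n ^ N * g) a"
proof (cases "mon_in n a \<and> degree_in n a = N + e")
  case True
  define S where "S = (\<Sum>b\<in>Poly_Mapping.keys g. Poly_Mapping.lookup g b * exponent_falling_fact n a b)"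
  have "(\<lambda>i. Poly_Mapping.lookup a i / (N + e)) \<in> std_simplex n"
    using True M by (auto simp: std_simplex_def mon_in_iff degree_in_def
        simp flip: sum_divide_distrib of_nat_sum)
  then have "\<mu> \<le> eval_poly g (\<lambda>i. Poly_Mapping.lookup a i / (N + e))" by (rule \<mu>(2))
  with falling_fact_sum_approx_eval_poly[OF g conjunct2[OF True] _ M] err
  have "\<mu> / 2 \<le> S / real (N + e) ^ e"
    unfolding S_def abs_le_iff by linarith
  then have S: "\<mu> / 2 * real (N + e) ^ e \<le> S"
    using M by (simp add: field_simps)
  have "(fact (N + e) :: real) \<le> fact N * real (N + e) ^ e"
    using fact_add_le[of N e] by (metis of_nat_fact of_nat_le_iff of_nat_mult of_nat_power)
  then have "\<mu> / 2 * fact (N + e) \<le> \<mu> / 2 * (fact N * real (N + e) ^ e)"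
    using \<mu>(1) by (intro mult_left_mono) auto
  also have "\<dots> = fact N * (\<mu> / 2 * real (N + e) ^ e)" by simp
  also have "\<dots> \<le> fact N * S"
    using S by (intro mult_left_mono) auto
  finally have "\<mu> / 2 * (fact (N + e) / exponent_fact n a) \<le> fact N / exponent_fact n a * S"
    using exponent_fact_pos[of n a] by (simp add: field_simps)
  then show ?thesis
    using True by (simp add: lookup_var_sum_power lookup_var_sum_power_mult_form[OF g] S_def)
next
  case False
  then show ?thesis
    by (auto simp: lookup_var_sum_power lookup_var_sum_power_mult_form[OF g])
qed

theorem polya_var_sum_power:
  assumes g: "is_form n e g" and pos: "\<And>x. x \<in> std_simplex n \<Longrightarrow> 0 < eval_poly g x"
  shows "\<exists>\<eta>>0. \<exists>N0. \<forall>N\<ge>N0.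
    coeffs_le (Poly_Mapping.single 0 \<eta> * var_sum n ^ (N + e)) (var_sum n ^ N * g)"
proof -
  obtain \<mu> where \<mu>: "0 < \<mu>" "\<And>x. x \<in> std_simplex n \<Longrightarrow> \<mu> \<le> eval_poly g x"
    using eval_poly_uniformly_pos_on_std_simplex[OF pos] by blast
  define A where "A = (\<Sum>b\<in>Poly_Mapping.keys g. \<bar>Poly_Mapping.lookup g b\<bar>)"
  define N0 where "N0 = nat \<lceil>2 * A * e * e / \<mu>\<rceil> + 1"
  have "coeffs_le (Poly_Mapping.single 0 (\<mu> / 2) * var_sum n ^ (N + e)) (var_sum n ^ N * g)"
    if N: "N0 \<le> N" for N
  proof -
    have M: "0 < N + e" using N by (simp add: N0_def)
    have "2 * A * e * e / \<mu> < N + e"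
      using N unfolding N0_def by linarith
    moreover have "0 < real N + real e" using M by linarith
    ultimately have "A * (real e * e / (N + e)) \<le> \<mu> / 2"
      using \<mu>(1) by (simp add: field_simps)
    then show ?thesis
      unfolding coeffs_le_def lookup_single_zero_mult A_def
      using polya_coeff_lower_bound[OF g \<mu> M] by blast
  qed
  then show ?thesis using \<mu>(1) by (intro exI[of _ "\<mu> / 2"]) auto
qed

section \<open>Absorbing the negative binomial terms\<close>

lemma binomial_dominates_shifted:
  fixes C :: real
  assumes L: "1 \<le> L"
  shows "\<exists>m0. \<forall>m\<ge>m0. \<forall>j<L. C * (m choose j) \<le> m choose (j + L)"
proof -
  define T where "T = real (2 * L) ^ (2 * L)"
  have T: "1 \<le> T" unfolding T_def using L by (intro one_le_power) auto
  show ?thesis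
  proof (intro exI allI impI)
    fix m j assume m: "max (2 * L) (nat \<lceil>C * T\<rceil>) \<le> m" and j: "j < L"
    have "C * T \<le> m" "1 \<le> m" "j \<le> m" using m L j by linarith+
    have "real m \<le> real m ^ L"
      using \<open>1 \<le> m\<close> L by (metis of_nat_1 of_nat_le_iff power_increasing power_one_right)
    with \<open>C * T \<le> m\<close> have "C * T \<le> real m ^ L" by linarith
    then have CT: "C \<le> real m ^ L / T"
      using T by (simp add: pos_le_divide_eq)
    have "real (2 * L) ^ (j + L) \<le> T"
      unfolding T_def using j L by (intro power_increasing) auto
    then have "real m ^ (j + L) / T \<le> (real m / real (2 * L)) ^ (j + L)"
      unfolding power_divide using L T by (intro divide_left_mono) auto
    also have "\<dots> \<le> (real m / real (j + L)) ^ (j + L)"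
      using j L by (intro power_mono divide_left_mono) auto
    also have "\<dots> \<le> m choose (j + L)"
      using j m by (intro binomial_ge_n_over_k_pow_k) simp
    finally have upper: "real m ^ j * (real m ^ L / T) \<le> m choose (j + L)"
      by (simp add: power_add)
    show "C * (m choose j) \<le> m choose (j + L)"
    proof (cases "C \<le> 0")
      case True
      then show ?thesis by (simp add: mult_nonpos_nonneg order.trans[OF _ of_nat_0_le_iff])
    next
      case False
      have "C * (m choose j) \<le> C * real m ^ j"
        using False binomial_le_pow[OF \<open>j \<le> m\<close>] by (simp flip: of_nat_power)
      also have "\<dots> \<le> (real m ^ L / T) * real m ^ j"
        using CT by (intro mult_right_mono) auto
      finally show ?thesis using upper by (simp add: mult.commute)
    qed
  qed
qed

lemma sum_atMost_pair_split:
  fixes W :: "nat \<Rightarrow> 'a::comm_monoid_add"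
  assumes "2 * L \<le> Suc m"
  shows "(\<Sum>j\<le>m. W j) = (\<Sum>j<L. W j + W (j + L)) + (\<Sum>j\<in>{2 * L..<Suc m}. W j)"
proof -
  have "(\<Sum>j\<le>m. W j) = sum W {0..<L} + sum W {L..<2 * L} + sum W {2 * L..<Suc m}"
    using assms unfolding atLeast0AtMost[symmetric] atLeastLessThanSuc_atLeastAtMost[symmetric]
    by (simp only: sum.atLeastLessThan_concat le0 mult_2 le_add1)
  moreover have "sum W {L..<2 * L} = (\<Sum>j<L. W (j + L))"
    using sum.shift_bounds_nat_ivl[of W 0 L L] by (simp add: mult_2 atLeast0LessThan)
  ultimately show ?thesis
    by (simp add: sum.distrib atLeast0LessThan)
qed

lemma coeffs_le_binomial_terms:
  fixes u r g Z :: "'a::comm_monoid_add \<Rightarrow>\<^sub>0 real" and m :: nat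
  assumes u: "nonneg_coeffs u" and r: "nonneg_coeffs r" and c: "0 \<le> c"
    and g_lower: "coeffs_le (- (Poly_Mapping.single 0 K * Z)) g"
    and g_shifted: "coeffs_le (Poly_Mapping.single 0 \<eta> * (u ^ L * Z)) (u ^ L * g)"
  defines "b j \<equiv> Poly_Mapping.single 0 (real (m choose j) * c ^ j) * u ^ j * r ^ (m - j)"
  shows "coeffs_le
    (\<Sum>j\<le>m. if j < L then - (Poly_Mapping.single 0 K * (b j * Z)) else Poly_Mapping.single 0 \<eta> * (b j * Z))
    ((Poly_Mapping.single 0 c * u + r) ^ m * g)"
proof -
  have "(Poly_Mapping.single 0 c * u + r) ^ m * g = (\<Sum>j\<le>m. b j * g)"
    unfolding b_def binomial_ring_single_zero sum_distrib_right ..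
  moreover have "coeffs_le
      (if j < L then - (Poly_Mapping.single 0 K * (b j * Z)) else Poly_Mapping.single 0 \<eta> * (b j * Z))
      (b j * g)" for j
  proof (cases "j < L")
    case True
    have "nonneg_coeffs (b j)"
      unfolding b_def using c u r
      by (intro nonneg_coeffs_mult nonneg_coeffs_power nonneg_coeffs_single) auto
    then show ?thesis
      using True coeffs_le_mult_left[OF _ g_lower, of "b j"] by (simp add: mult_ac)
  next
    case False
    define b' where "b' = Poly_Mapping.single 0 (real (m choose j) * c ^ j) * u ^ (j - L) * r ^ (m - j)"
    have "u ^ j = u ^ (j - L) * u ^ L"
      using False by (simp flip: power_add)
    then have "b j = b' * u ^ L"
      by (simp add: b_def b'_def mult_ac)
    moreover have "nonneg_coeffs b'"
      unfolding b'_def using c u r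
      by (intro nonneg_coeffs_mult nonneg_coeffs_power nonneg_coeffs_single) auto
    ultimately show ?thesis
      using coeffs_le_mult_left[OF _ g_shifted, of b'] False by (simp add: mult_ac)
  qed
  ultimately show ?thesis
    by (simp add: coeffs_le_sum)
qed

lemma nonneg_coeffs_power_mult_if_sandwiched:
  fixes u f g Z :: "'a::comm_monoid_add \<Rightarrow>\<^sub>0 real"
  assumes u: "nonneg_coeffs u" and Z: "nonneg_coeffs Z"
    and c: "0 < c" and K: "0 \<le> K" and \<eta>: "0 < \<eta>" and L: "1 \<le> L"
    and f_lower: "coeffs_le (Poly_Mapping.single 0 c * u) f"
    and f_upper: "coeffs_le f (Poly_Mapping.single 0 R * u)"
    and g_lower: "coeffs_le (- (Poly_Mapping.single 0 K * Z)) g"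
    and g_shifted: "coeffs_le (Poly_Mapping.single 0 \<eta> * (u ^ L * Z)) (u ^ L * g)"
  shows "\<exists>m\<ge>1. nonneg_coeffs (f ^ m * g)"
proof -
  let ?s = "Poly_Mapping.single (0::'a)"
  define r where "r = f - ?s c * u"
  have r: "nonneg_coeffs r"
    using f_lower by (simp add: r_def coeffs_le_iff_nonneg_coeffs_diff)
  have r_upper: "coeffs_le r (?s R * u)"
    using f_upper u c unfolding coeffs_le_def nonneg_coeffs_def r_def
    by (auto simp: lookup_minus lookup_single_zero_mult intro: order.trans[rotated])
  obtain m0 where m0: "\<And>m j. m0 \<le> m \<Longrightarrow> j < L \<Longrightarrow>
      K * R ^ L / (\<eta> * c ^ L) * (m choose j) \<le> m choose (j + L)"
    using binomial_dominates_shifted[OF L] by blast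
  define m where "m = max m0 (2 * L)"
  define b where "b j = ?s (real (m choose j) * c ^ j) * u ^ j * r ^ (m - j)" for j
  have b: "nonneg_coeffs (b j)" for j
    unfolding b_def using c u r
    by (intro nonneg_coeffs_mult nonneg_coeffs_power nonneg_coeffs_single) auto
  define W where "W j = (if j < L then - (?s K * (b j * Z)) else ?s \<eta> * (b j * Z))" for j
  have "f = ?s c * u + r" by (simp add: r_def)
  then have lower: "coeffs_le (\<Sum>j\<le>m. W j) (f ^ m * g)"
    using coeffs_le_binomial_terms[OF u r _ g_lower g_shifted, of c m] c
    unfolding W_def b_def by simp
  have pair: "nonneg_coeffs (W j + W (j + L))" if j: "j < L" for j
  proof -
    define X where "X = u ^ j * r ^ (m - (j + L)) * Z"
    have X: "nonneg_coeffs X"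
      unfolding X_def using u r Z by (intro nonneg_coeffs_mult nonneg_coeffs_power)
    have "r ^ (m - j) = r ^ L * r ^ (m - (j + L))"
      using j by (simp add: m_def flip: power_add)
    then have neg: "?s K * (b j * Z) = ?s (K * (real (m choose j) * c ^ j)) * (r ^ L * X)"
      by (simp add: b_def X_def single_zero_mult mult_ac)
    have pos: "?s \<eta> * (b (j + L) * Z) =
        ?s (\<eta> * (real (m choose (j + L)) * c ^ (j + L))) * (u ^ L * X)"
      by (simp add: b_def X_def single_zero_mult power_add mult_ac)
    have "K * R ^ L / (\<eta> * c ^ L) * (m choose j) \<le> m choose (j + L)"
      using j by (intro m0) (simp add: m_def)
    then have "K * (real (m choose j) * c ^ j) * R ^ L \<le> \<eta> * (real (m choose (j + L)) * c ^ (j + L))"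
      using \<eta> c by (simp add: field_simps power_add)
    then have "coeffs_le (?s K * (b j * Z)) (?s \<eta> * (b (j + L) * Z))"
      unfolding neg pos using c K by (intro coeffs_le_smult_power_mult[OF u r X r_upper]) auto
    then show ?thesis
      using j by (simp add: W_def coeffs_le_iff_nonneg_coeffs_diff)
  qed
  have rest: "nonneg_coeffs (W j)" if "L \<le> j" for j
    using that \<eta> Z b unfolding W_def
    by (auto intro!: nonneg_coeffs_mult nonneg_coeffs_single)
  have split: "(\<Sum>j\<le>m. W j) = (\<Sum>j<L. W j + W (j + L)) + (\<Sum>j\<in>{2 * L..<Suc m}. W j)"
    by (rule sum_atMost_pair_split) (simp add: m_def)
  have "nonneg_coeffs (\<Sum>j\<le>m. W j)"
    unfolding split by (rule nonneg_coeffs_add; rule nonneg_coeffs_sum) (use pair rest in auto)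
  then have "nonneg_coeffs (f ^ m * g)"
    using lower by (rule nonneg_coeffs_coeffs_le)
  moreover have "1 \<le> m" using L by (simp add: m_def)
  ultimately show ?thesis by blast
qed

theorem lemma5p1:
  fixes n d e :: nat and f g :: rpoly
  assumes f_form: "is_form n d f"
    and f_nonconst: "f \<noteq> 0" "d \<ge> 1"
    and f_pos: "\<And>w. mon_in n w \<Longrightarrow> mon_deg w = d \<Longrightarrow> Poly_Mapping.lookup f w > 0"
    and g_form: "is_form n e g"
    and g_pos: "\<And>x::nat \<Rightarrow> real. (\<forall>i<n. x i \<ge> 0) \<Longrightarrow> (\<exists>i<n. x i \<noteq> 0) \<Longrightarrow> eval_poly g x > 0"
    and deg_dvd: "d dvd e"
  shows "\<exists>m::nat. m \<ge> 1 \<and> (\<forall>w. Poly_Mapping.lookup (f ^ m * g) w \<ge> 0)"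
proof -
  have g_pos_simplex: "\<And>x. x \<in> std_simplex n \<Longrightarrow> 0 < eval_poly g x"
    by (rule eval_poly_pos_on_std_simplex[OF g_pos])
  obtain c R where c: "0 < c"
    and f_lower: "coeffs_le (Poly_Mapping.single 0 c * var_sum n ^ d) f"
    and f_upper: "coeffs_le f (Poly_Mapping.single 0 R * var_sum n ^ d)"
    using form_sandwiched_by_var_sum_power[OF f_form f_pos] by blast
  obtain K where K: "0 \<le> K" and g_lower: "coeffs_le (- (Poly_Mapping.single 0 K * var_sum n ^ e)) g"
    using form_bounded_below_by_var_sum_power[OF g_form] by blast
  obtain \<eta> N0 where \<eta>: "0 < \<eta>" and polya: "\<forall>N\<ge>N0.
      coeffs_le (Poly_Mapping.single 0 \<eta> * var_sum n ^ (N + e)) (var_sum n ^ N * g)"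
    using polya_var_sum_power[OF g_form g_pos_simplex] by auto
  define L where "L = N0 + 1"
  have "N0 \<le> d * L"
    using mult_le_mono1[OF f_nonconst(2), of L] by (simp add: L_def)
  then have g_shifted: "coeffs_le (Poly_Mapping.single 0 \<eta> * ((var_sum n ^ d) ^ L * var_sum n ^ e))
      ((var_sum n ^ d) ^ L * g)"
    using polya by (metis power_add power_mult)
  obtain m where "1 \<le> m" "nonneg_coeffs (f ^ m * g)"
    using nonneg_coeffs_power_mult_if_sandwiched[OF nonneg_coeffs_var_sum_power nonneg_coeffs_var_sum_power
      c K \<eta> _ f_lower f_upper g_lower g_shifted] by (auto simp: L_def)
  then show ?thesis by (auto simp: nonneg_coeffs_def)
qed

end
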